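(* Let $m\in\mathbb Z^+$, let $\sigma$ be a linear permutation of $\mathbb Z_m$, and let $\zeta_m$ be a primitive $m$-th root of unity. Suppose one of the following holds: (i) $q$ is a prime with $q=mf+1$ for some even integer $f$; let $\alpha$ be a generator of $\mathbb Z_q^*$, $D_k=\{\alpha^{mi+k}:0\le i\le f-1\}$, and let $\underline a$ be the sequence of period $q$ with $a_0=0$ and $a_i=\zeta_m^k$ for $i\in D_{\sigma(k)}$; (ii) $q=2p$ for a prime $p$ with $q=mf+l$, $f$ even and $l=p+1$; let $\alpha$ be a generator of the cyclic group $\mathbb Z_q^*$, $D_k=\{\alpha^{mi+k}:0\le i\le f-1\}$, and let $\underline a$ be the sequence of period $q$ with $a_i=\zeta_m^k$ for $i\in D_{\sigma(k)}$ and $a_i=0$ for $i\notin\mathbb Z_q^*$. Then $\underline a$ is symmetric except for $a_0$, i.e. $a_i=a_{q-i}$ for all $1\le i\le q-1$.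
   Context: A linear permutation of $\mathbb Z_m$ is a map $x\mapsto ux+v\pmod m$ with $\gcd(u,m)=1$. The sequences defined in (i) and (ii) are called almost $m$-ary $\sigma$-sequences. *)

theory Defs
  imports "HOL-Analysis.Analysis" "HOL-Number_Theory.Number_Theory"
begin

definition lin_perm :: "nat \<Rightarrow> nat \<Rightarrow> nat \<Rightarrow> nat \<Rightarrow> nat" where
  "lin_perm m u v x = (u * x + v) mod m"

definition prim_root_unity :: "nat \<Rightarrow> complex \<Rightarrow> bool" where
  "prim_root_unity m z \<longleftrightarrow> z ^ m = 1 \<and> (\<forall>j. 0 < j \<and> j < m \<longrightarrow> z ^ j \<noteq> 1)"

definition cyc_class :: "nat \<Rightarrow> nat \<Rightarrow> nat \<Rightarrow> nat \<Rightarrow> nat \<Rightarrow> nat set" where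
  "cyc_class q m f \<alpha> k = {\<alpha> ^ (m * i + k) mod q | i. i < f}"

end

theory Submission
  imports Defs
begin

text \<open>Write \<open>q - 1 \<equiv> \<alpha>\<^sup>e (mod q)\<close> with \<open>0 < e < \<phi>(q)\<close>. Since \<open>(q - 1)\<^sup>2 \<equiv> 1\<close>, the order
  \<open>\<phi>(q)\<close> of \<open>\<alpha>\<close> divides \<open>2 e\<close>, hence \<open>e = \<phi>(q)/2 = m f/2\<close>. As \<open>f\<close> is even, multiplying
  \<open>\<alpha>\<^bsup>m i + k\<^esup>\<close> by \<open>-1\<close> only shifts \<open>i\<close> by \<open>f/2\<close> modulo \<open>f\<close>, so every class \<open>D\<^sub>k\<close> is
  closed under \<open>x \<mapsto> q - x\<close>, and \<open>x\<close>, \<open>q - x\<close> receive the same value whenever \<open>x\<close> is a unit. Off the units, which in case (i) means \<open>x = 0\<close>,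
  \<open>x\<close> and \<open>q - x\<close> are non-units together and the sequence vanishes at both.\<close>

lemma cong_mult_minus_one_nat:
  fixes i q :: nat
  assumes "0 < i" "i \<le> q"
  shows "[i * (q - 1) = q - i] (mod q)"
proof -
  obtain j d where "i = Suc j" "q = i + d"
    using assms by (metis le_Suc_ex not0_implies_Suc not_gr_zero)
  then have "i * (q - 1) = (q - i) + j * q"
    by (simp add: algebra_simps)
  then show ?thesis
    by (simp add: cong_def)
qed

lemma coprime_diff_left_iff_nat:
  fixes i q :: nat
  assumes "i \<le> q"
  shows "coprime (q - i) q \<longleftrightarrow> coprime i q"
  using gcd_diff2_nat[OF assms] by (simp only: coprime_iff_gcd_eq_1)

lemma residue_primroot_power_half_totient:
  assumes pr: "residue_primroot q \<alpha>" and q2: "q > 2"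
  shows "[\<alpha> ^ (totient q div 2) = q - 1] (mod q)"
proof -
  have "q - 1 \<in> totatives q"
    using minus_one_in_totatives[of q] q2 by linarith
  then obtain e where e: "e < totient q" and e_eq: "\<alpha> ^ e mod q = q - 1"
    using residue_primroot_is_generator[OF _ pr] q2 unfolding bij_betw_def by force
  have e_cong: "[\<alpha> ^ e = q - 1] (mod q)"
    using e_eq q2 by (simp add: cong_def)
  have "e \<noteq> 0"
    using e_eq q2 by (cases "e = 0") auto
  have "[(q - 1) * (q - 1) = 1] (mod q)"
    using cong_mult_minus_one_nat[of "q - 1" q] q2 by simp
  then have "[\<alpha> ^ e * \<alpha> ^ e = 1] (mod q)"
    using cong_mult[OF e_cong e_cong] cong_trans by blast
  then have "[\<alpha> ^ (2 * e) = 1] (mod q)"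
    by (simp add: mult_2 power_add)
  then have "totient q dvd 2 * e"
    using pr by (simp add: ord_divides' residue_primroot_def)
  with \<open>e \<noteq> 0\<close> e have "totient q = 2 * e"
    using dvd_imp_le[of "totient q" "2 * e"] divisor_less_eq_half_nat[of "totient q" "2 * e"]
    by fastforce
  then show ?thesis
    using e_cong by simp
qed

lemma totative_in_cyc_class:
  assumes pr: "residue_primroot q \<alpha>" and "q > 1" and tot: "totient q = m * f"
    and "i \<in> totatives q"
  obtains k where "k < m" "i \<in> cyc_class q m f \<alpha> k"
proof -
  obtain e where e: "e < m * f" and i_eq: "i = \<alpha> ^ e mod q"
    using residue_primroot_is_generator[OF \<open>q > 1\<close> pr] \<open>i \<in> totatives q\<close> tot
    unfolding bij_betw_def by auto
  then have "m > 0"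
    by (cases m) auto
  have "e div m < f"
    using e by (simp add: div_less_iff_less_mult mult.commute \<open>m > 0\<close>)
  then have "i \<in> cyc_class q m f \<alpha> (e mod m)"
    unfolding cyc_class_def i_eq by (auto intro!: exI[of _ "e div m"])
  then show thesis
    using that[of "e mod m"] \<open>m > 0\<close> by simp
qed

lemma cyc_class_minus_closed:
  assumes pr: "residue_primroot q \<alpha>" and q2: "q > 2" and tot: "totient q = m * f"
    and "even f" and i: "i \<in> cyc_class q m f \<alpha> k"
  shows "q - i \<in> cyc_class q m f \<alpha> k"
proof -
  obtain j where j: "j < f" and i_eq: "i = \<alpha> ^ (m * j + k) mod q"
    using i unfolding cyc_class_def by blast
  obtain h where f_eq: "f = 2 * h"
    using \<open>even f\<close> by blast
  have minus_one: "[\<alpha> ^ (m * h) = q - 1] (mod q)"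
    using residue_primroot_power_half_totient[OF pr q2] tot f_eq by (simp add: mult.left_commute)
  have period: "[\<alpha> ^ (m * f) = 1] (mod q)"
    using pr tot by (simp add: residue_primroot_def ord_divides')
  have "coprime i q"
    using pr i_eq by (simp add: residue_primroot_def coprime_commute)
  then have "0 < i"
    using q2 by (cases "i = 0") auto
  have "i < q"
    using q2 i_eq by simp
  have i_cong: "[\<alpha> ^ (m * j + k) = i] (mod q)"
    using i_eq by (simp add: cong_def)
  define j' where "j' = (j + h) mod f"
  define t where "t = (j + h) div f"
  have "j' < f"
    using j by (simp add: j'_def)
  have "j + h = f * t + j'"
    by (simp add: j'_def t_def)
  then have "m * j + k + m * h = (m * j' + k) + m * f * t"
    by (metis add.assoc add.commute distrib_left mult.assoc)
  then have "\<alpha> ^ (m * j + k) * \<alpha> ^ (m * h) = \<alpha> ^ (m * j' + k) * (\<alpha> ^ (m * f)) ^ t"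
    by (metis power_add power_mult)
  also have "[\<dots> = \<alpha> ^ (m * j' + k)] (mod q)"
    using cong_mult[OF cong_refl cong_pow[OF period, of t]] by simp
  finally have "[\<alpha> ^ (m * j' + k) = \<alpha> ^ (m * j + k) * \<alpha> ^ (m * h)] (mod q)"
    by (rule cong_sym)
  also have "[\<alpha> ^ (m * j + k) * \<alpha> ^ (m * h) = i * (q - 1)] (mod q)"
    using cong_mult[OF i_cong minus_one] .
  also have "[i * (q - 1) = q - i] (mod q)"
    using cong_mult_minus_one_nat \<open>0 < i\<close> \<open>i < q\<close> by simp
  finally have "q - i = \<alpha> ^ (m * j' + k) mod q"
    using \<open>0 < i\<close> \<open>i < q\<close> by (simp add: cong_def)
  then show ?thesis
    using \<open>j' < f\<close> unfolding cyc_class_def by blast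
qed

lemma lin_perm_image:
  assumes "m > 0" "coprime u m"
  shows "lin_perm m u v ` {..<m} = {..<m}"
proof -
  have "inj_on (lin_perm m u v) {..<m}"
  proof (rule inj_onI)
    fix x y assume xy: "x \<in> {..<m}" "y \<in> {..<m}" "lin_perm m u v x = lin_perm m u v y"
    then have "[u * x + v = u * y + v] (mod m)"
      by (simp add: lin_perm_def cong_def)
    then have "[u * x = u * y] (mod m)"
      by (simp add: cong_add_rcancel_nat)
    then have "[x = y] (mod m)"
      using assms(2) by (simp add: cong_mult_lcancel_nat coprime_commute)
    then show "x = y"
      using xy by (simp add: cong_def)
  qed
  moreover have "lin_perm m u v ` {..<m} \<subseteq> {..<m}"
    using assms(1) by (auto simp: lin_perm_def)
  ultimately show ?thesis
    by (simp add: endo_inj_surj)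
qed

lemma symmetric_on_totatives:
  assumes pr: "residue_primroot q \<alpha>" and q2: "q > 2" and tot: "totient q = m * f"
    and "even f" and "coprime u m"
    and labels: "\<forall>i k. k < m \<longrightarrow> i \<in> cyc_class q m f \<alpha> (lin_perm m u v k) \<longrightarrow> a i = \<zeta> ^ k"
    and "i \<in> totatives q"
  shows "a (q - i) = a i"
proof -
  obtain r where "r < m" and r: "i \<in> cyc_class q m f \<alpha> r"
    using totative_in_cyc_class[OF pr _ tot \<open>i \<in> totatives q\<close>] q2 by auto
  then have "r \<in> lin_perm m u v ` {..<m}"
    using lin_perm_image[OF _ \<open>coprime u m\<close>] by simp
  then obtain k where "k < m" and k: "lin_perm m u v k = r"
    by auto
  have lab: "\<And>x. x \<in> cyc_class q m f \<alpha> r \<Longrightarrow> a x = \<zeta> ^ k"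
    using labels[rule_format, OF \<open>k < m\<close>] unfolding k .
  have "q - i \<in> cyc_class q m f \<alpha> r"
    using cyc_class_minus_closed[OF pr q2 tot \<open>even f\<close> r] .
  then have "a (q - i) = \<zeta> ^ k"
    by (rule lab)
  with lab[OF r] show ?thesis
    by simp
qed

lemma symmetric_off_zero:
  assumes pr: "residue_primroot q \<alpha>" and q2: "q > 2" and tot: "totient q = m * f"
    and "even f" and "coprime u m"
    and labels: "\<forall>i k. k < m \<longrightarrow> i \<in> cyc_class q m f \<alpha> (lin_perm m u v k) \<longrightarrow> a i = \<zeta> ^ k"
    and nonunits: "\<forall>x<q. \<not> coprime x q \<longrightarrow> a x = 0"
    and "0 < i" "i < q"
  shows "a (q - i) = a i"
proof (cases "coprime i q")
  case True
  with \<open>0 < i\<close> \<open>i < q\<close> have "i \<in> totatives q"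
    by (simp add: in_totatives_iff)
  then show ?thesis
    using symmetric_on_totatives[OF pr q2 tot \<open>even f\<close> \<open>coprime u m\<close> labels] by simp
next
  case False
  moreover have "\<not> coprime (q - i) q"
    using False \<open>i < q\<close> coprime_diff_left_iff_nat[of i q] by simp
  ultimately show ?thesis
    using nonunits \<open>0 < i\<close> \<open>i < q\<close> by simp
qed

lemma not_coprime_less_prime_eq_0:
  fixes q x :: nat
  assumes "prime q" "x < q" "\<not> coprime x q"
  shows "x = 0"
  using assms prime_imp_coprime[OF assms(1), of x] dvd_imp_le[of q x] by (auto simp: coprime_commute)

lemma prime_case_totient:
  fixes q m f :: nat
  assumes "prime q" "q = m * f + 1" "even f" "m > 0"
  shows "q > 2" and "totient q = m * f"
proof -
  have "f \<noteq> 0"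
    using assms(1,2) by (cases f) auto
  with \<open>even f\<close> have "f \<ge> 2"
    by presburger
  moreover have "m * f \<ge> f"
    using \<open>m > 0\<close> by simp
  ultimately show "q > 2"
    using assms(2) by linarith
  show "totient q = m * f"
    using assms(1,2) by (simp add: totient_prime)
qed

lemma twice_prime_case_totient:
  fixes q m f p :: nat
  assumes "prime p" "q = 2 * p" "q = m * f + (p + 1)" "even f"
  shows "q > 2" and "totient q = m * f"
proof -
  have mf: "m * f = p - 1"
    using assms(2,3) by linarith
  have "p \<noteq> 2"
  proof
    assume "p = 2"
    then have "m * f = 1"
      using mf by simp
    then show False
      using \<open>even f\<close> by simp
  qed
  then have "p > 2"
    using prime_gt_1_nat[OF assms(1)] by simp
  then have "odd p"
    using prime_odd_nat[OF assms(1)] by simp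
  show "q > 2"
    using assms(2) \<open>p > 2\<close> by simp
  show "totient q = m * f"
    using assms(1,2) \<open>odd p\<close> mf by (simp add: totient_double totient_prime)
qed

theorem proposition8:
  fixes m q f \<alpha> u v :: nat and \<zeta> :: complex and a :: "nat \<Rightarrow> complex"
  assumes "m > 0"
    and "coprime u m"
    and "prim_root_unity m \<zeta>"
    and "(prime q \<and> q = m * f + 1 \<and> even f \<and> residue_primroot q \<alpha>
          \<and> (\<forall>i. a i = a (i mod q)) \<and> a 0 = 0
          \<and> (\<forall>i k. k < m \<longrightarrow> i \<in> cyc_class q m f \<alpha> (lin_perm m u v k) \<longrightarrow> a i = \<zeta> ^ k))
       \<or> (\<exists>p. prime p \<and> q = 2 * p \<and> q = m * f + (p + 1) \<and> even f \<and> residue_primroot q \<alpha>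
          \<and> (\<forall>i. a i = a (i mod q))
          \<and> (\<forall>i k. k < m \<longrightarrow> i \<in> cyc_class q m f \<alpha> (lin_perm m u v k) \<longrightarrow> a i = \<zeta> ^ k)
          \<and> (\<forall>i. i < q \<longrightarrow> \<not> coprime i q \<longrightarrow> a i = 0))"
  shows "\<forall>i. 1 \<le> i \<and> i \<le> q - 1 \<longrightarrow> a i = a (q - i)"
proof -
  have pr: "residue_primroot q \<alpha>"
    using assms(4) by (elim disjE exE conjE)
  have "even f"
    using assms(4) by (elim disjE exE conjE)
  have labels: "\<forall>i k. k < m \<longrightarrow> i \<in> cyc_class q m f \<alpha> (lin_perm m u v k) \<longrightarrow> a i = \<zeta> ^ k"
    using assms(4) by (elim disjE exE conjE)
  have "q > 2 \<and> totient q = m * f \<and> (\<forall>x<q. \<not> coprime x q \<longrightarrow> a x = 0)"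
    using assms(4)
  proof (elim disjE exE conjE)
    assume "prime q" "q = m * f + 1" "even f" "a 0 = 0"
    then have "\<forall>x<q. \<not> coprime x q \<longrightarrow> a x = 0"
      by (metis not_coprime_less_prime_eq_0)
    with prime_case_totient[OF \<open>prime q\<close> \<open>q = m * f + 1\<close> \<open>even f\<close> \<open>m > 0\<close>] show ?thesis
      by (intro conjI)
  next
    fix p assume "prime p" "q = 2 * p" "q = m * f + (p + 1)" "even f"
      and "\<forall>i. i < q \<longrightarrow> \<not> coprime i q \<longrightarrow> a i = 0"
    with twice_prime_case_totient[OF \<open>prime p\<close> \<open>q = 2 * p\<close> \<open>q = m * f + (p + 1)\<close> \<open>even f\<close>]
    show ?thesis
      by (intro conjI)
  qed
  then have q2: "q > 2" and tot: "totient q = m * f"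
    and nonunits: "\<forall>x<q. \<not> coprime x q \<longrightarrow> a x = 0"
    by auto
  show ?thesis
  proof (intro allI impI)
    fix i assume "1 \<le> i \<and> i \<le> q - 1"
    then have "0 < i" "i < q"
      using q2 by linarith+
    then show "a i = a (q - i)"
      using symmetric_off_zero[OF pr q2 tot \<open>even f\<close> \<open>coprime u m\<close> labels nonunits] by simp
  qed
qed

end
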